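(* Let $N>2$ and assume (H1)–(H4). For $a>0$ let $v_a$ be the solution of $(P_a)$ on $[0,R^{2-N}]$. Then for all sufficiently large $a>0$, $v_a$ has a first local maximum $M_a\in(0,R^{2-N})$. Moreover $M_a\to0$ and $v_a(M_a)\to\infty$ as $a\to\infty$.
   Context: Fix $N>2$, $R>0$, $0<\delta<2$. The function $f:\mathbb{R}\setminus\{0\}\to\mathbb{R}$ is odd and locally Lipschitz and satisfies: (H1) there exist $p>1$ and a function $g$ with $f(u)=|u|^{p-1}u+g(u)$ for all sufficiently large $|u|$, and $\lim_{u\to\infty}|g(u)|/|u|^{p}=0$; (H2) there exist $0<q<1$ and a locally Lipschitz $g_1:\mathbb{R}\to\mathbb{R}$ with $g_1(0)=0$ such that $f(u)=-\frac{1}{|u|^{q-1}u}+g_1(u)$ for all sufficiently small $|u|\neq 0$; (H3) $f$ has a unique positive zero $\beta$, with $f<0$ on $(0,\beta)$ and $f>0$ on $(\beta,\infty)$. $K:[R,\infty)\to(0,\infty)$ with $K$ and $K'$ continuous, and (H4) $\frac{rK'(r)}{K(r)}>-2(N-1)$ on $[R,\infty)$, and there exist $K_0,K_1>0$ and exponents with $N+q(N-2)<\alpha_1\leq\alpha<2(N-1)$ such that $K_0r^{-\alpha}\leq K(r)\leq K_1r^{-\alpha_1}$ on $[R,\infty)$. Define $h(t)=\frac{t^{\frac{2(N-1)}{2-N}}K(t^{\frac{1}{2-N}})}{(N-2)^2}$ for $0<t\le R^{2-N}$. The initial value problem $(P_a)$ is $$v''(t)+h(t)f(v(t))+\frac{v(t)}{t^{2-\delta}}=0\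 (t>0),\qquad v(0)=0,\ v'(0)=a,$$ understood in the integrated sense: $v\in C^1[0,R^{2-N}]$, $v(0)=0$, $h f(v)$ integrable, and $v'(t)=a-\int_0^t h(s)f(v(s))\,ds-\int_0^t s^{\delta-2}v(s)\,ds$ for all $t\in[0,R^{2-N}]$. This solution exists on all of $[0,R^{2-N}]$ and is unique. *)

theory Defs
  imports "HOL-Analysis.Analysis"
begin

definition loc_lipschitz_on :: "real set \<Rightarrow> (real \<Rightarrow> real) \<Rightarrow> bool" where
  "loc_lipschitz_on S f \<longleftrightarrow>
     (\<forall>x\<in>S. \<exists>e>0. \<exists>L. L-lipschitz_on (ball x e \<inter> S) f)"

definition hfun :: "nat \<Rightarrow> (real \<Rightarrow> real) \<Rightarrow> real \<Rightarrow> real" where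
  "hfun N K t = t powr (2 * (real N - 1) / (2 - real N)) * K (t powr (1 / (2 - real N)))
                 / (real N - 2)^2"

text \<open>v solves (P_a) on [0, R^(2-N)] in the integrated sense: v is C^1 on [0,T],
  v(0)=0, h f(v) is (Lebesgue) integrable on [0,T], and
  v'(t) = a - int_0^t h f(v) - int_0^t s^(delta-2) v(s) ds for all t in [0,T].\<close>
definition solves_Pa ::
  "nat \<Rightarrow> real \<Rightarrow> real \<Rightarrow> (real \<Rightarrow> real) \<Rightarrow> (real \<Rightarrow> real) \<Rightarrow> real \<Rightarrow> (real \<Rightarrow> real) \<Rightarrow> bool" where
  "solves_Pa N R \<delta> K f a v \<longleftrightarrow>
     (let T = R powr (2 - real N) in
      \<exists>v'. (\<forall>t\<in>{0..T}. (v has_real_derivative v' t) (at t within {0..T}))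
        \<and> continuous_on {0..T} v'
        \<and> v 0 = 0
        \<and> (\<lambda>s. hfun N K s * f (v s)) absolutely_integrable_on {0..T}
        \<and> (\<forall>t\<in>{0..T}. v' t = a - integral {0..t} (\<lambda>s. hfun N K s * f (v s))
                                - integral {0..t} (\<lambda>s. s powr (\<delta> - 2) * v s)))"

definition interior_local_max :: "real \<Rightarrow> (real \<Rightarrow> real) \<Rightarrow> real \<Rightarrow> bool" where
  "interior_local_max T v M \<longleftrightarrow>
     M \<in> {0<..<T} \<and> (\<exists>e>0. \<forall>t\<in>{0..T}. \<bar>t - M\<bar> < e \<longrightarrow> v t \<le> v M)"

definition first_local_max :: "real \<Rightarrow> (real \<Rightarrow> real) \<Rightarrow> real \<Rightarrow> bool" where
  "first_local_max T v M \<longleftrightarrow>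
     interior_local_max T v M \<and> (\<forall>s\<in>{0<..<M}. \<not> interior_local_max T v s)"

end

theory Submission
  imports Defs
begin

text \<open>
  The solution leaves 0 with slope a. As long as a/2 \<le> v' \<le> 2a, v is comparable to
  the line a t, and the bounds h(t) \<le> C t^e1, f(u) \<ge> -C u^(-q), f(u) \<le> C + 2 u^p turn
  the integrated equation into a-priori estimates that keep v' strictly inside (a/2, 2a)
  on an initial interval [0, \<tau>]; a continuity argument closes this bootstrap. At \<tau>
  the solution has reached v \<ge> a \<tau>/2, where f(v) \<ge> v^p/2 and h \<ge> h0 > 0 make v'
  fall by 4a within time 8a/(h0 (a \<tau>/2)^p). The first zero M of v' is the first local
  maximum: v increases before M, and f(v) > 0 keeps v' \<le> 0 just after M. The scale
  \<tau> = a^(-\<theta>) with (p-1)/(p+e1+1) < \<theta> < (p-1)/p makes all estimates hold for large a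
  and gives M \<le> \<tau> + O(a^(1-(1-\<theta>)p)) \<rightarrow> 0 and v(M) \<ge> a^(1-\<theta>)/2 \<rightarrow> \<infinity>.
\<close>

section \<open>Real-analysis preliminaries\<close>

lemma loc_lipschitz_on_imp_continuous_on:
  assumes "loc_lipschitz_on S f"
  shows "continuous_on S f"
  unfolding continuous_on_eq_continuous_within
proof
  fix x assume x: "x \<in> S"
  then obtain e L where e: "e > 0" and L: "L-lipschitz_on (ball x e \<inter> S) f"
    using assms unfolding loc_lipschitz_on_def by blast
  have "continuous (at x within (ball x e \<inter> S)) f"
    using lipschitz_on_continuous_on[OF L] x e by (simp add: continuous_on_eq_continuous_within)
  moreover have "at x within (ball x e \<inter> S) = at x within S"
    by (rule at_within_nhd[where S = "ball x e"]) (use e in auto)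
  ultimately show "continuous (at x within S) f"
    by (simp add: continuous_within)
qed

lemma continuous_on_first_nonpos:
  fixes g :: "real \<Rightarrow> real"
  assumes "continuous_on {a..b} g" "s \<in> {a..b}" "g s \<le> 0"
  obtains m where "m \<in> {a..s}" "g m \<le> 0" "\<And>x. x \<in> {a..<m} \<Longrightarrow> 0 < g x"
proof -
  define Z where "Z = {a..b} \<inter> g -` {..0}"
  have "closed Z"
    unfolding Z_def by (rule continuous_closed_preimage[OF assms(1)]) auto
  moreover have "bounded Z"
    unfolding Z_def by (rule bounded_subset[of "{a..b}"]) auto
  ultimately have "compact Z"
    by (simp add: compact_eq_bounded_closed)
  moreover have "s \<in> Z" using assms by (simp add: Z_def)
  ultimately obtain m where m: "m \<in> Z" "\<forall>z\<in>Z. m \<le> z"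
    using compact_attains_inf by blast
  have "0 < g x" if x: "x \<in> {a..<m}" for x
  proof (rule ccontr)
    assume "\<not> 0 < g x"
    then have "x \<in> Z" using x m(1) by (auto simp: Z_def)
    then show False using m(2) x by force
  qed
  then show thesis
    using that[of m] m \<open>s \<in> Z\<close> by (simp add: Z_def)
qed

lemma first_local_maxI:
  assumes "M \<in> {0<..<T}" and "strict_mono_on {0..M} v"
    and "\<exists>e>0. \<forall>t\<in>{M..T}. t - M < e \<longrightarrow> v t \<le> v M"
  shows "first_local_max T v M"
proof -
  obtain e where e: "e > 0" "\<forall>t\<in>{M..T}. t - M < e \<longrightarrow> v t \<le> v M"
    using assms(3) by blast
  have "v t \<le> v M" if "t \<in> {0..T}" "\<bar>t - M\<bar> < e" for t
  proof (cases "t \<le> M")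
    case True
    then show ?thesis
      using that strict_mono_onD[OF assms(2), of t M] by (cases "t = M") auto
  next
    case False
    then show ?thesis using that e(2) by auto
  qed
  moreover have "\<not> interior_local_max T v s" if s: "s \<in> {0<..<M}" for s
  proof
    assume "interior_local_max T v s"
    then obtain d where d: "d > 0" "\<forall>t\<in>{0..T}. \<bar>t - s\<bar> < d \<longrightarrow> v t \<le> v s"
      unfolding interior_local_max_def by blast
    define t where "t = s + min d (M - s) / 2"
    have "s < t" "t < M" "\<bar>t - s\<bar> < d" unfolding t_def using s d by (auto simp: min_def field_simps)
    then have "v s < v t" "v t \<le> v s"
      using s d(2) assms(1) strict_mono_onD[OF assms(2), of s t] by auto
    then show False by simp
  qed
  ultimately show ?thesis
    using e(1) assms(1) unfolding first_local_max_def interior_local_max_def by blast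
qed

lemma integral_le_powr:
  fixes F :: "real \<Rightarrow> real"
  assumes "F integrable_on {0..t}" "0 \<le> t" "t \<le> \<tau>" "-1 < e" "0 \<le> c"
    and "\<And>s. s \<in> {0<..t} \<Longrightarrow> F s \<le> c * s powr e"
  shows "integral {0..t} F \<le> c * \<tau> powr (e + 1) / (e + 1)"
proof -
  define G where "G s = (if s = 0 then F s else c * s powr e)" for s
  have powr_int: "((\<lambda>s. c * s powr e) has_integral c * (t powr (e + 1) / (e + 1))) {0..t}"
    using has_integral_mult_right[OF has_integral_powr_from_0[OF assms(4,2)]] .
  have "(G has_integral c * (t powr (e + 1) / (e + 1))) {0..t}"
    by (rule has_integral_spike[OF negligible_sing _ powr_int]) (auto simp: G_def)
  then have "integral {0..t} F \<le> c * (t powr (e + 1) / (e + 1))"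
    by (rule has_integral_le[OF integrable_integral[OF assms(1)]])
       (use assms(6) in \<open>auto simp: G_def\<close>)
  also have "\<dots> \<le> c * (\<tau> powr (e + 1) / (e + 1))"
    using assms by (intro mult_left_mono divide_right_mono powr_mono2) auto
  finally show ?thesis by simp
qed

lemma powr_mult_measurable_lebesgue_on:
  fixes v :: "real \<Rightarrow> real"
  assumes "continuous_on {a..b} v"
  shows "(\<lambda>s. s powr c * v s) \<in> borel_measurable (lebesgue_on {a..b})"
proof -
  have [measurable]: "v \<in> borel_measurable (lebesgue_on {a..b})"
    using assms by (intro continuous_imp_measurable_on_sets_lebesgue) auto
  have "(\<lambda>s::real. s powr c) \<in> borel_measurable (restrict_space borel {a..b})"
    by (rule measurable_restrict_space1) measurable
  then have [measurable]: "(\<lambda>s::real. s powr c) \<in> borel_measurable (lebesgue_on {a..b})"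
    by (rule borel_measurable_subalgebra[rotated 2]) (auto simp: sets_restrict_space)
  show ?thesis by measurable
qed

lemma eventually_powr_less_linear:
  fixes c \<kappa> d :: real
  assumes "\<kappa> < 1" "0 < d"
  shows "eventually (\<lambda>x. c * x powr \<kappa> < d * x) at_top"
proof -
  have "((\<lambda>x. c * x powr (\<kappa> - 1)) \<longlongrightarrow> c * 0) at_top"
    using assms by (intro tendsto_intros tendsto_neg_powr filterlim_ident) auto
  then have "eventually (\<lambda>x. c * x powr (\<kappa> - 1) < d) at_top"
    using assms(2) by (intro order_tendstoD(2)) auto
  then show ?thesis using eventually_gt_at_top[of 0]
  proof eventually_elim
    case (elim x)
    then have "c * x powr (\<kappa> - 1) * x < d * x" by (intro mult_strict_right_mono) auto
    moreover have "x powr (\<kappa> - 1) * x = x powr \<kappa>"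
      using powr_mult_base[of x "\<kappa> - 1"] elim by (simp add: mult.commute)
    ultimately show ?case by (simp add: mult.assoc)
  qed
qed

section \<open>Bounds on the nonlinearity and the weight\<close>

lemma one_le_powr_ratio:
  fixes u r q :: real
  assumes "0 < u" "u \<le> r" "0 \<le> q"
  shows "1 \<le> r powr q * u powr (- q)"
proof -
  have "r powr q * u powr (- q) = (r / u) powr q"
    using assms by (simp add: powr_divide powr_minus_divide)
  then show ?thesis
    using assms by (simp add: ge_one_powr_ge_zero)
qed

lemma powr_perturbation_bounds:
  fixes f g :: "real \<Rightarrow> real" and p :: real
  assumes "\<exists>U. \<forall>u. \<bar>u\<bar> \<ge> U \<longrightarrow> f u = \<bar>u\<bar> powr (p - 1) * u + g u"
    and "((\<lambda>u. \<bar>g u\<bar> / \<bar>u\<bar> powr p) \<longlongrightarrow> 0) at_top"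
  shows "\<exists>U>0. \<forall>u\<ge>U. u powr p / 2 \<le> f u \<and> f u \<le> 2 * u powr p"
proof -
  obtain U0 where U0: "\<And>u. \<bar>u\<bar> \<ge> U0 \<Longrightarrow> f u = \<bar>u\<bar> powr (p - 1) * u + g u"
    using assms(1) by blast
  obtain U1 where U1: "\<And>u. u \<ge> U1 \<Longrightarrow> \<bar>g u\<bar> / \<bar>u\<bar> powr p < 1 / 2"
    using order_tendstoD(2)[OF assms(2), of "1 / 2"] by (auto simp: eventually_at_top_linorder)
  define U where "U = max (max U0 U1) 1"
  have "u powr p / 2 \<le> f u \<and> f u \<le> 2 * u powr p" if "u \<ge> U" for u
  proof -
    have u: "0 < u" "U0 \<le> u" "U1 \<le> u" using that by (auto simp: U_def)
    have "f u = u powr p + g u"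
      using U0[of u] u powr_mult_base[of u "p - 1"] by (simp add: mult.commute)
    moreover have "\<bar>g u\<bar> < u powr p / 2"
      using U1[OF u(3)] u(1) by (simp add: divide_less_eq)
    ultimately show ?thesis by auto
  qed
  moreover have "U > 0" by (simp add: U_def)
  ultimately show ?thesis by blast
qed

lemma powr_growth_upper_bound:
  fixes f :: "real \<Rightarrow> real"
  assumes "continuous_on {0<..} f" "0 < \<beta>" "\<And>u. 0 < u \<Longrightarrow> u < \<beta> \<Longrightarrow> f u < 0"
    and "\<And>u. U \<le> u \<Longrightarrow> f u \<le> 2 * u powr p"
  shows "\<exists>C\<ge>0. \<forall>u>0. f u \<le> C + 2 * u powr p"
proof -
  obtain B where B: "B \<ge> 0" "\<And>u. u \<in> {\<beta>..U} \<Longrightarrow> \<bar>f u\<bar> \<le> B"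
  proof (rule continuous_on_compact_bound[OF compact_Icc])
    show "continuous_on {\<beta>..U} f"
      by (rule continuous_on_subset[OF assms(1)]) (use assms(2) in auto)
  qed auto
  have "f u \<le> B + 2 * u powr p" if "u > 0" for u
  proof -
    have "0 \<le> u powr p" by simp
    consider "u < \<beta>" | "u \<in> {\<beta>..U}" | "U \<le> u" by force
    then show ?thesis
    proof cases
      case 1
      then show ?thesis using assms(3)[OF that] B(1) \<open>0 \<le> u powr p\<close> by linarith
    next
      case 2
      then show ?thesis using abs_le_D1[OF B(2)[OF 2]] \<open>0 \<le> u powr p\<close> by linarith
    next
      case 3
      then show ?thesis using assms(4) B(1) by fastforce
    qed
  qed
  then show ?thesis using B(1) by blast
qed

lemma neg_powr_lower_bound_near_0:
  fixes f g1 :: "real \<Rightarrow> real"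
  assumes "0 < q" "isCont g1 0"
    and "\<exists>\<epsilon>>0. \<forall>u. 0 < \<bar>u\<bar> \<and> \<bar>u\<bar> < \<epsilon> \<longrightarrow> f u = - 1 / (\<bar>u\<bar> powr (q - 1) * u) + g1 u"
  obtains r C where "0 < r" "0 \<le> C" "\<And>u. 0 < u \<Longrightarrow> u < r \<Longrightarrow> - C * u powr (- q) \<le> f u"
proof -
  obtain \<epsilon> where \<epsilon>: "\<epsilon> > 0"
    and f_near_0: "\<And>u. 0 < u \<Longrightarrow> u < \<epsilon> \<Longrightarrow> f u = - 1 / (u powr (q - 1) * u) + g1 u"
    using assms(3) by fastforce
  obtain d where d: "d > 0" "\<And>u. \<bar>u\<bar> < d \<Longrightarrow> \<bar>g1 u - g1 0\<bar> < 1"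
    using assms(2) unfolding continuous_at_eps_delta by (metis dist_real_def zero_less_one diff_0_right)
  define r where "r = min \<epsilon> d"
  define G where "G = \<bar>g1 0\<bar> + 1"
  have "- (1 + G * r powr q) * u powr (- q) \<le> f u" if u: "0 < u" "u < r" for u
  proof -
    have "f u = g1 u - u powr (- q)"
      using f_near_0[of u] u powr_mult_base[of u "q - 1"]
      by (simp add: r_def mult.commute powr_minus_divide)
    moreover have "\<bar>g1 u\<bar> \<le> G * (r powr q * u powr (- q))"
      using d(2)[of u] u one_le_powr_ratio[of u r q] assms(1)
      by (smt (verit, best) G_def r_def mult_le_cancel_left1)
    ultimately show ?thesis by (simp add: algebra_simps)
  qed
  moreover have "0 < r" "0 \<le> 1 + G * r powr q" using \<epsilon> d by (simp_all add: r_def G_def)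
  ultimately show thesis using that by blast
qed

lemma neg_powr_lower_bound:
  fixes f :: "real \<Rightarrow> real"
  assumes "continuous_on {0<..} f" "0 \<le> q" "0 < r" "0 \<le> C0"
    and "\<And>u. 0 < u \<Longrightarrow> u < r \<Longrightarrow> - C0 * u powr (- q) \<le> f u"
    and "\<And>u. \<beta> < u \<Longrightarrow> 0 \<le> f u"
  shows "\<exists>C\<ge>0. \<forall>u>0. - C * u powr (- q) \<le> f u"
proof -
  define b where "b = max r \<beta>"
  obtain B where B: "B \<ge> 0" "\<And>u. u \<in> {r..b} \<Longrightarrow> \<bar>f u\<bar> \<le> B"
  proof (rule continuous_on_compact_bound[OF compact_Icc])
    show "continuous_on {r..b} f"
      by (rule continuous_on_subset[OF assms(1)]) (use assms(3) in auto)
  qed auto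
  define C where "C = C0 + B * b powr q"
  have "- C * u powr (- q) \<le> f u" if u: "u > 0" for u
  proof -
    have nonneg: "0 \<le> C0 * u powr (- q)" "0 \<le> B * b powr q * u powr (- q)"
      using assms(4) B(1) by simp_all
    consider "u < r" | "u \<in> {r..b}" | "b < u" by force
    then show ?thesis
    proof cases
      case 1
      then show ?thesis using assms(5)[OF u] nonneg(2) by (simp add: C_def algebra_simps)
    next
      case 2
      then have "B \<le> B * (b powr q * u powr (- q))"
        using B(1) one_le_powr_ratio[of u b q] u assms(2) by (simp add: mult_le_cancel_left1)
      then show ?thesis using abs_le_D2[OF B(2)[OF 2]] nonneg(1) by (simp add: C_def algebra_simps)
    next
      case 3
      then show ?thesis using assms(6)[of u] nonneg by (simp add: C_def b_def algebra_simps)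
    qed
  qed
  moreover have "C \<ge> 0" using B(1) assms(4) by (simp add: C_def)
  ultimately show ?thesis by blast
qed

lemma nonlinearity_bounds:
  fixes f g g1 :: "real \<Rightarrow> real"
  assumes f_cont: "continuous_on {0<..} f" and "0 < q" "0 < \<beta>" "isCont g1 0"
    and "\<exists>U. \<forall>u. \<bar>u\<bar> \<ge> U \<longrightarrow> f u = \<bar>u\<bar> powr (p - 1) * u + g u"
    and "((\<lambda>u. \<bar>g u\<bar> / \<bar>u\<bar> powr p) \<longlongrightarrow> 0) at_top"
    and "\<exists>\<epsilon>>0. \<forall>u. 0 < \<bar>u\<bar> \<and> \<bar>u\<bar> < \<epsilon> \<longrightarrow> f u = - 1 / (\<bar>u\<bar> powr (q - 1) * u) + g1 u"
    and "\<forall>u. 0 < u \<and> u < \<beta> \<longrightarrow> f u < 0" "\<forall>u>\<beta>. f u > 0"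
  obtains Cf C2 U where "0 \<le> Cf" "0 \<le> C2"
    "\<And>u. 0 < u \<Longrightarrow> - Cf * u powr (- q) \<le> f u"
    "\<And>u. 0 < u \<Longrightarrow> f u \<le> C2 + 2 * u powr p"
    "\<And>u. U \<le> u \<Longrightarrow> u powr p / 2 \<le> f u"
proof -
  obtain r C0 where "0 < r" "0 \<le> C0" "\<And>u. 0 < u \<Longrightarrow> u < r \<Longrightarrow> - C0 * u powr (- q) \<le> f u"
    using neg_powr_lower_bound_near_0[OF assms(2,4,7)] by blast
  then obtain Cf where Cf: "0 \<le> Cf" "\<forall>u>0. - Cf * u powr (- q) \<le> f u"
    using neg_powr_lower_bound[OF f_cont, of q r C0 \<beta>] assms(2,9) by fastforce
  obtain U where U: "\<forall>u\<ge>U. u powr p / 2 \<le> f u \<and> f u \<le> 2 * u powr p"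
    using powr_perturbation_bounds[OF assms(5,6)] by blast
  have "\<exists>C\<ge>0. \<forall>u>0. f u \<le> C + 2 * u powr p"
    by (rule powr_growth_upper_bound[OF f_cont assms(3)]) (use assms(8) U in auto)
  then obtain C2 where "0 \<le> C2" "\<forall>u>0. f u \<le> C2 + 2 * u powr p"
    by blast
  then show thesis using that[of Cf C2 U] Cf U by blast
qed

lemma hfun_bounds:
  fixes K :: "real \<Rightarrow> real"
  assumes N: "N > 2" and R: "R > 0" and K_pos: "\<forall>r\<ge>R. K r > 0"
    and K_bounds: "\<forall>r\<ge>R. K0 * r powr (- \<alpha>) \<le> K r \<and> K r \<le> K1 * r powr (- \<alpha>1)"
    and s: "0 < s" "s \<le> R powr (2 - real N)"
  shows "0 < hfun N K s"
    and "hfun N K s \<le> K1 / (real N - 2)^2 * s powr ((\<alpha>1 - 2 * (real N - 1)) / (real N - 2))"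
    and "K0 / (real N - 2)^2 * s powr ((\<alpha> - 2 * (real N - 1)) / (real N - 2)) \<le> hfun N K s"
proof -
  define n where "n = real N"
  have n: "n > 2" using N by (simp add: n_def)
  define r where "r = s powr (1 / (2 - n))"
  have "(R powr (2 - n)) powr (1 / (2 - n)) \<le> r"
    unfolding r_def using s n by (intro powr_mono2') (auto simp: n_def)
  then have "R \<le> r" using R n by (simp add: powr_powr)
  then have Kr: "0 < K r" "K0 * r powr (- \<alpha>) \<le> K r" "K r \<le> K1 * r powr (- \<alpha>1)"
    using K_pos K_bounds by auto
  have h_eq: "hfun N K s = s powr (2 * (n - 1) / (2 - n)) * K r / (n - 2)^2"
    by (simp add: hfun_def r_def n_def)
  have exponent: "s powr (2 * (n - 1) / (2 - n)) * r powr (- \<gamma>) = s powr ((\<gamma> - 2 * (n - 1)) / (n - 2))"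
    for \<gamma>
  proof -
    have "2 * (n - 1) / (2 - n) + 1 / (2 - n) * - \<gamma> = (\<gamma> - 2 * (n - 1)) / (n - 2)"
      using n by (simp add: divide_simps) (simp add: algebra_simps)
    then show ?thesis
      by (simp add: r_def powr_powr flip: powr_add)
  qed
  have d: "0 < (n - 2)^2" using n by simp
  show "0 < hfun N K s" using h_eq Kr(1) d s(1) by simp
  have "hfun N K s \<le> s powr (2 * (n - 1) / (2 - n)) * (K1 * r powr (- \<alpha>1)) / (n - 2)^2"
    unfolding h_eq using Kr(3) d by (intro divide_right_mono mult_left_mono) auto
  then show "hfun N K s \<le> K1 / (real N - 2)^2 * s powr ((\<alpha>1 - 2 * (real N - 1)) / (real N - 2))"
    using exponent[of \<alpha>1] by (simp add: n_def mult_ac)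
  have "s powr (2 * (n - 1) / (2 - n)) * (K0 * r powr (- \<alpha>)) / (n - 2)^2 \<le> hfun N K s"
    unfolding h_eq using Kr(2) d by (intro divide_right_mono mult_left_mono) auto
  then show "K0 / (real N - 2)^2 * s powr ((\<alpha> - 2 * (real N - 1)) / (real N - 2)) \<le> hfun N K s"
    using exponent[of \<alpha>] by (simp add: n_def mult_ac)
qed

lemma hfun_weight_bounds:
  fixes K :: "real \<Rightarrow> real"
  assumes N: "N > 2" and R: "R > 0" and K_pos: "\<forall>r\<ge>R. K r > 0"
    and K_bounds: "\<forall>r\<ge>R. K0 * r powr (- \<alpha>) \<le> K r \<and> K r \<le> K1 * r powr (- \<alpha>1)"
    and "0 < K0" "0 < K1" "real N + q * (real N - 2) < \<alpha>1" "\<alpha> < 2 * (real N - 1)"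
  shows "\<exists>C1\<ge>0. \<exists>e1>q - 1. \<exists>h0>0. \<forall>s\<in>{0<..R powr (2 - real N)}.
           0 < hfun N K s \<and> hfun N K s \<le> C1 * s powr e1 \<and> h0 \<le> hfun N K s"
proof -
  define T where "T = R powr (2 - real N)"
  define e1 where "e1 = (\<alpha>1 - 2 * (real N - 1)) / (real N - 2)"
  define e where "e = (\<alpha> - 2 * (real N - 1)) / (real N - 2)"
  define c0 where "c0 = K0 / (real N - 2)^2"
  have N2: "real N - 2 > 0" using N by simp
  have "e1 - (q - 1) = (\<alpha>1 - (real N + q * (real N - 2))) / (real N - 2)"
    using N2 by (simp add: e1_def field_simps)
  moreover have "0 < (\<alpha>1 - (real N + q * (real N - 2))) / (real N - 2)"
    using assms(7) N2 by simp
  ultimately have e1: "q - 1 < e1" by linarith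
  have "e < 0" using assms(8) N2 by (simp add: e_def divide_neg_pos)
  have "0 < hfun N K s \<and> hfun N K s \<le> K1 / (real N - 2)^2 * s powr e1 \<and> c0 * T powr e \<le> hfun N K s"
    if s: "s \<in> {0<..T}" for s
  proof -
    have "c0 * T powr e \<le> c0 * s powr e"
      using s \<open>e < 0\<close> assms(5) by (intro mult_left_mono powr_mono2') (auto simp: c0_def)
    then show ?thesis
      using hfun_bounds[OF N R K_pos K_bounds] s by (force simp: T_def c0_def e_def e1_def)
  qed
  moreover have "0 < c0 * T powr e" using assms(5) N2 R by (simp add: c0_def T_def)
  moreover have "0 \<le> K1 / (real N - 2)^2" using assms(6) by simp
  ultimately show ?thesis
    using e1 unfolding T_def by blast
qed

section \<open>Integrated solutions\<close>

locale integral_solution =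
  fixes T \<delta> :: real and H f :: "real \<Rightarrow> real" and a :: real and v w :: "real \<Rightarrow> real"
  assumes T_pos: "0 < T" and \<delta>_pos: "0 < \<delta>"
    and v_deriv: "\<And>t. t \<in> {0..T} \<Longrightarrow> (v has_real_derivative w t) (at t within {0..T})"
    and w_cont: "continuous_on {0..T} w"
    and v_0: "v 0 = 0"
    and Hf_integrable: "(\<lambda>s. H s * f (v s)) integrable_on {0..T}"
    and w_eq: "\<And>t. t \<in> {0..T} \<Longrightarrow>
      w t = a - integral {0..t} (\<lambda>s. H s * f (v s)) - integral {0..t} (\<lambda>s. s powr (\<delta> - 2) * v s)"
begin

lemma v_cont: "continuous_on {0..T} v"
  using v_deriv by (rule DERIV_continuous_on)

lemma w_0: "w 0 = a"
  using w_eq[of 0] T_pos by simp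

lemma v_mvt:
  assumes "0 \<le> s" "s < t" "t \<le> T"
  shows "\<exists>x\<in>{s<..<t}. v t - v s = w x * (t - s)"
proof -
  have "\<exists>x\<in>{s<..<t}. v t - v s = (\<lambda>h. w x * h) (t - s)"
  proof (rule mvt_simple[OF assms(2)])
    fix x assume "s \<le> x" "x \<le> t"
    then have "(v has_real_derivative w x) (at x within {s..t})"
      using assms by (intro DERIV_subset[OF v_deriv]) auto
    then show "(v has_derivative (\<lambda>h. w x * h)) (at x within {s..t})"
      by (simp add: has_field_derivative_def)
  qed
  then show ?thesis by simp
qed

lemma v_between_slopes:
  assumes "t \<in> {0..T}" "\<And>x. x \<in> {0<..<t} \<Longrightarrow> lo \<le> w x \<and> w x \<le> hi"
  shows "lo * t \<le> v t \<and> v t \<le> hi * t"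
proof (cases "t = 0")
  case False
  then obtain x where "x \<in> {0<..<t}" "v t = w x * t"
    using v_mvt[of 0 t] assms(1) v_0 by auto
  then show ?thesis
    using assms(2)[of x] by (auto intro: mult_right_mono)
qed (simp add: v_0)

lemma v_strict_mono_on:
  assumes "0 \<le> s" "t \<le> T" "\<And>x. x \<in> {s<..<t} \<Longrightarrow> 0 < w x"
  shows "strict_mono_on {s..t} v"
proof (rule strict_mono_onI)
  fix x y assume "x \<in> {s..t}" "y \<in> {s..t}" "x < y"
  then obtain z where "z \<in> {x<..<y}" "v y - v x = w z * (y - x)"
    using v_mvt[of x y] assms by auto
  moreover have "0 < w z * (y - x)"
    using assms(3)[of z] \<open>z \<in> {x<..<y}\<close> \<open>x \<in> {s..t}\<close> \<open>y \<in> {s..t}\<close> by simp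
  ultimately show "v x < v y" by simp
qed

lemma singular_term_integrable: "(\<lambda>s. s powr (\<delta> - 2) * v s) integrable_on {0..T}"
proof -
  obtain L where L: "L \<ge> 0" "\<And>x. x \<in> {0..T} \<Longrightarrow> \<bar>w x\<bar> \<le> L"
    using continuous_on_compact_bound[OF compact_Icc w_cont] by (metis real_norm_def)
  have v_bound: "\<bar>v s\<bar> \<le> L * s" if s: "s \<in> {0..T}" for s
  proof -
    have "- L \<le> w x \<and> w x \<le> L" if "x \<in> {0<..<s}" for x
      using L(2)[of x] that s by (auto simp: abs_le_iff)
    then show ?thesis
      using v_between_slopes[OF s, of "- L" L] by (auto simp: abs_le_iff)
  qed
  have "((\<lambda>s. L * s powr (\<delta> - 1)) has_integral L * (T powr \<delta> / \<delta>)) {0..T}"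
    using has_integral_mult_right[OF has_integral_powr_from_0[of "\<delta> - 1" T]] \<delta>_pos T_pos by simp
  then have majorant: "(\<lambda>s. L * s powr (\<delta> - 1)) integrable_on {0..T}"
    by (rule has_integral_integrable)
  have meas: "(\<lambda>s. s powr (\<delta> - 2) * v s) \<in> borel_measurable (lebesgue_on {0..T})"
    using v_cont by (rule powr_mult_measurable_lebesgue_on)
  have bound: "\<bar>s powr (\<delta> - 2) * v s\<bar> \<le> L * s powr (\<delta> - 1)" if s: "s \<in> {0..T}" for s
  proof (cases "s = 0")
    case False
    have "\<bar>s powr (\<delta> - 2) * v s\<bar> \<le> s powr (\<delta> - 2) * (L * s)"
      using v_bound[OF s] by (simp add: abs_mult mult_left_mono)
    also have "\<dots> = L * s powr (\<delta> - 1)"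
      using powr_mult_base[of s "\<delta> - 2"] s by (simp add: mult_ac)
    finally show ?thesis .
  qed (simp add: v_0)
  show ?thesis
    using measurable_bounded_by_integrable_imp_integrable_real[OF meas majorant bound] by simp
qed

lemma w_diff:
  assumes "0 \<le> x" "x \<le> y" "y \<le> T"
  shows "w y = w x - integral {x..y} (\<lambda>s. H s * f (v s)) - integral {x..y} (\<lambda>s. s powr (\<delta> - 2) * v s)"
proof -
  have "integral {0..x} F + integral {x..y} F = integral {0..y} F"
    if "F integrable_on {0..T}" for F :: "real \<Rightarrow> real"
    using assms integrable_on_subinterval[OF that, of 0 y]
    by (intro Henstock_Kurzweil_Integration.integral_combine) auto
  from this[OF Hf_integrable] this[OF singular_term_integrable] show ?thesis
    using w_eq[of x] w_eq[of y] assms by auto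
qed

lemma w_decrease:
  assumes "0 \<le> x" "x \<le> y" "y \<le> T" "\<And>s. s \<in> {x..y} \<Longrightarrow> 0 \<le> v s"
  shows "w y \<le> w x - integral {x..y} (\<lambda>s. H s * f (v s))"
proof -
  have "0 \<le> integral {x..y} (\<lambda>s. s powr (\<delta> - 2) * v s)"
    using assms integrable_on_subinterval[OF singular_term_integrable, of x y]
    by (intro Henstock_Kurzweil_Integration.integral_nonneg) auto
  then show ?thesis using w_diff[OF assms(1-3)] by linarith
qed

end

section \<open>The first maximum at an admissible scale\<close>

locale weighted_problem =
  fixes T \<delta> p q \<beta> C1 e1 h0 Cf C2 U :: real and H f :: "real \<Rightarrow> real"
  assumes T_pos: "0 < T" and \<delta>_pos: "0 < \<delta>" and p_gt_1: "1 < p" and q_pos: "0 < q"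
    and e1_gt: "q - 1 < e1" and \<beta>_pos: "0 < \<beta>" and h0_pos: "0 < h0"
    and C1_nonneg: "0 \<le> C1" and Cf_nonneg: "0 \<le> Cf" and C2_nonneg: "0 \<le> C2"
    and H_pos: "\<And>s. s \<in> {0<..T} \<Longrightarrow> 0 < H s"
    and H_le: "\<And>s. s \<in> {0<..T} \<Longrightarrow> H s \<le> C1 * s powr e1"
    and H_ge: "\<And>s. s \<in> {0<..T} \<Longrightarrow> h0 \<le> H s"
    and f_ge: "\<And>u. 0 < u \<Longrightarrow> - Cf * u powr (- q) \<le> f u"
    and f_le: "\<And>u. 0 < u \<Longrightarrow> f u \<le> C2 + 2 * u powr p"
    and f_ge_large: "\<And>u. U \<le> u \<Longrightarrow> u powr p / 2 \<le> f u"
    and f_pos: "\<And>u. \<beta> < u \<Longrightarrow> 0 < f u"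
begin

text \<open>Once v \<ge> V = a \<tau>/2, v' decreases at rate at least h0 V^p/2, so within time
  8a/(h0 V^p) after \<tau> it has fallen by 4a, more than its value at \<tau>.\<close>

definition peak_bound :: "real \<Rightarrow> real \<Rightarrow> real" where
  "peak_bound a \<tau> = \<tau> + 8 * a / (h0 * (a * \<tau> / 2) powr p)"

text \<open>The two inequalities bound the two integrals of the equation on [0, \<tau>] and close the
  bootstrap a/2 < v' < 2a; the last conjuncts make f(v) large and positive beyond \<tau> and
  keep the resulting maximum inside (0, T).\<close>

definition admissible :: "real \<Rightarrow> real \<Rightarrow> bool" where
  "admissible a \<tau> \<longleftrightarrow> 0 < a \<and> 0 < \<tau> \<and>
     C1 * Cf * (a / 2) powr (- q) * \<tau> powr (e1 - q + 1) / (e1 - q + 1) < a \<and>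
     C1 * (C2 + 2 * (2 * a * \<tau>) powr p) * \<tau> powr (e1 + 1) / (e1 + 1) + 2 * a * \<tau> powr \<delta> / \<delta> < a / 2 \<and>
     max U \<beta> < a * \<tau> / 2 \<and> peak_bound a \<tau> < T"

lemma admissible_less_peak_bound:
  assumes "admissible a \<tau>"
  shows "\<tau> < peak_bound a \<tau>" "peak_bound a \<tau> < T"
  using assms h0_pos by (auto simp: admissible_def peak_bound_def)

end

locale weighted_solution = weighted_problem + integral_solution T \<delta> H f a v w for a v w
begin

lemma Hf_integral_lower:
  assumes "0 < t" "t \<le> \<tau>" "\<tau> \<le> T" "0 < a" "\<And>s. s \<in> {0..t} \<Longrightarrow> a * s / 2 \<le> v s"
  shows "- (C1 * Cf * (a / 2) powr (- q) * \<tau> powr (e1 - q + 1) / (e1 - q + 1))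
           \<le> integral {0..t} (\<lambda>s. H s * f (v s))"
proof -
  have "integral {0..t} (\<lambda>s. - (H s * f (v s))) \<le> C1 * Cf * (a / 2) powr (- q) * \<tau> powr (e1 - q + 1) / (e1 - q + 1)"
  proof (rule integral_le_powr)
    show "(\<lambda>s. - (H s * f (v s))) integrable_on {0..t}"
      using assms integrable_on_subinterval[OF Hf_integrable, of 0 t] by (intro integrable_neg) auto
    fix s assume s: "s \<in> {0<..t}"
    have H: "0 < H s" "H s \<le> C1 * s powr e1" using s assms H_pos H_le by auto
    have v: "0 < a * s / 2" "a * s / 2 \<le> v s" using s assms by auto
    show "- (H s * f (v s)) \<le> C1 * Cf * (a / 2) powr (- q) * s powr (e1 - q)"
    proof (cases "0 \<le> f (v s)")
      case True
      then have "0 \<le> H s * f (v s)" using H by simp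
      moreover have "0 \<le> C1 * Cf * (a / 2) powr (- q) * s powr (e1 - q)"
        using C1_nonneg Cf_nonneg by simp
      ultimately show ?thesis by linarith
    next
      case False
      have "- f (v s) \<le> Cf * v s powr (- q)" using f_ge[of "v s"] v by simp
      also have "\<dots> \<le> Cf * (a * s / 2) powr (- q)"
        using v Cf_nonneg q_pos by (intro mult_left_mono powr_mono2') auto
      also have "\<dots> = Cf * (a / 2) powr (- q) * s powr (- q)"
        using v by (simp add: powr_mult[symmetric])
      finally have "H s * (- f (v s)) \<le> C1 * s powr e1 * (Cf * (a / 2) powr (- q) * s powr (- q))"
        using H False by (intro mult_mono) auto
      moreover have "s powr (e1 - q) = s powr e1 * s powr (- q)"
        by (simp add: powr_add[symmetric])
      ultimately show ?thesis by (simp add: mult_ac)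
    qed
  qed (use assms e1_gt C1_nonneg Cf_nonneg in auto)
  then show ?thesis by simp
qed

lemma Hf_integral_upper:
  assumes "0 < t" "t \<le> \<tau>" "\<tau> \<le> T" "\<And>s. s \<in> {0<..t} \<Longrightarrow> 0 < v s \<and> v s \<le> 2 * a * \<tau>"
  shows "integral {0..t} (\<lambda>s. H s * f (v s)) \<le> C1 * (C2 + 2 * (2 * a * \<tau>) powr p) * \<tau> powr (e1 + 1) / (e1 + 1)"
proof (rule integral_le_powr)
  show "(\<lambda>s. H s * f (v s)) integrable_on {0..t}"
    using assms integrable_on_subinterval[OF Hf_integrable, of 0 t] by auto
  fix s assume s: "s \<in> {0<..t}"
  have H: "0 < H s" "H s \<le> C1 * s powr e1" using s assms H_pos H_le by auto
  have "f (v s) \<le> C2 + 2 * v s powr p" using f_le assms(4)[OF s] by simp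
  also have "\<dots> \<le> C2 + 2 * (2 * a * \<tau>) powr p"
    using assms(4)[OF s] p_gt_1 by (simp add: powr_mono2)
  finally have "H s * f (v s) \<le> H s * (C2 + 2 * (2 * a * \<tau>) powr p)"
    using H by simp
  also have "\<dots> \<le> C1 * s powr e1 * (C2 + 2 * (2 * a * \<tau>) powr p)"
    using H C2_nonneg by (intro mult_right_mono) auto
  finally show "H s * f (v s) \<le> C1 * (C2 + 2 * (2 * a * \<tau>) powr p) * s powr e1"
    by (simp add: mult_ac)
qed (use assms e1_gt q_pos C1_nonneg C2_nonneg in auto)

lemma singular_integral_bounds:
  assumes "0 < t" "t \<le> \<tau>" "\<tau> \<le> T" "0 \<le> a" "\<And>s. s \<in> {0..t} \<Longrightarrow> 0 \<le> v s \<and> v s \<le> 2 * a * s"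
  shows "0 \<le> integral {0..t} (\<lambda>s. s powr (\<delta> - 2) * v s)"
    and "integral {0..t} (\<lambda>s. s powr (\<delta> - 2) * v s) \<le> 2 * a * \<tau> powr \<delta> / \<delta>"
proof -
  have int: "(\<lambda>s. s powr (\<delta> - 2) * v s) integrable_on {0..t}"
    using assms integrable_on_subinterval[OF singular_term_integrable, of 0 t] by auto
  then show "0 \<le> integral {0..t} (\<lambda>s. s powr (\<delta> - 2) * v s)"
    using assms(5) by (intro Henstock_Kurzweil_Integration.integral_nonneg) auto
  have "integral {0..t} (\<lambda>s. s powr (\<delta> - 2) * v s) \<le> 2 * a * \<tau> powr (\<delta> - 1 + 1) / (\<delta> - 1 + 1)"
  proof (rule integral_le_powr[OF int])
    fix s assume s: "s \<in> {0<..t}"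
    have "s powr (\<delta> - 2) * v s \<le> s powr (\<delta> - 2) * (2 * a * s)"
      using assms(5)[of s] s by (intro mult_left_mono) auto
    also have "\<dots> = 2 * a * s powr (\<delta> - 1)"
      using powr_mult_base[of s "\<delta> - 2"] s by (simp add: mult_ac)
    finally show "s powr (\<delta> - 2) * v s \<le> 2 * a * s powr (\<delta> - 1)" .
  qed (use assms \<delta>_pos in auto)
  then show "integral {0..t} (\<lambda>s. s powr (\<delta> - 2) * v s) \<le> 2 * a * \<tau> powr \<delta> / \<delta>"
    by simp
qed


lemma derivative_a_priori_bound:
  assumes adm: "admissible a \<tau>" and m: "0 < m" "m \<le> \<tau>"
    and v_slopes: "\<And>s. s \<in> {0..m} \<Longrightarrow> a * s / 2 \<le> v s \<and> v s \<le> 2 * a * s"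
  shows "a / 2 < w m \<and> w m < 2 * a"
proof -
  have a: "0 < a" and mT: "m \<le> \<tau>" "\<tau> \<le> T"
    using adm m admissible_less_peak_bound[OF adm] by (auto simp: admissible_def)
  have v_nonneg: "0 \<le> v s \<and> v s \<le> 2 * a * s" if "s \<in> {0..m}" for s
  proof -
    have "0 \<le> a * s / 2" using that a by simp
    then show ?thesis using v_slopes[OF that] by linarith
  qed
  have "- (C1 * Cf * (a / 2) powr (- q) * \<tau> powr (e1 - q + 1) / (e1 - q + 1))
           \<le> integral {0..m} (\<lambda>s. H s * f (v s))"
    by (rule Hf_integral_lower[OF m(1) mT a]) (use v_slopes in blast)
  moreover have "integral {0..m} (\<lambda>s. H s * f (v s))
      \<le> C1 * (C2 + 2 * (2 * a * \<tau>) powr p) * \<tau> powr (e1 + 1) / (e1 + 1)"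
  proof (rule Hf_integral_upper[OF m(1) mT])
    fix s assume s: "s \<in> {0<..m}"
    have "0 < a * s / 2" "2 * a * s \<le> 2 * a * \<tau>"
      using s a mT by auto
    then show "0 < v s \<and> v s \<le> 2 * a * \<tau>"
      using v_slopes[of s] s by auto
  qed
  moreover have "0 \<le> integral {0..m} (\<lambda>s. s powr (\<delta> - 2) * v s)"
    and "integral {0..m} (\<lambda>s. s powr (\<delta> - 2) * v s) \<le> 2 * a * \<tau> powr \<delta> / \<delta>"
    using singular_integral_bounds[OF m(1) mT] a v_nonneg by auto
  moreover have "w m = a - integral {0..m} (\<lambda>s. H s * f (v s)) - integral {0..m} (\<lambda>s. s powr (\<delta> - 2) * v s)"
    using w_eq mT m by auto
  ultimately show ?thesis
    using adm unfolding admissible_def by linarith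
qed

lemma derivative_bootstrap:
  assumes adm: "admissible a \<tau>" and t: "t \<in> {0..\<tau>}"
  shows "a / 2 < w t \<and> w t < 2 * a"
proof (rule ccontr)
  define g where "g t = min (w t - a / 2) (2 * a - w t)" for t
  have a: "0 < a" and \<tau>T: "\<tau> < T"
    using adm admissible_less_peak_bound[OF adm] by (auto simp: admissible_def)
  assume "\<not> (a / 2 < w t \<and> w t < 2 * a)"
  then have "g t \<le> 0" by (auto simp: g_def)
  moreover have "continuous_on {0..\<tau>} g"
    unfolding g_def using \<tau>T by (intro continuous_intros continuous_on_subset[OF w_cont]) auto
  ultimately obtain m where m: "m \<in> {0..t}" "g m \<le> 0" and before: "\<And>x. x \<in> {0..<m} \<Longrightarrow> 0 < g x"
    using continuous_on_first_nonpos[of 0 \<tau> g t] t by blast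
  have "0 < g 0" using a w_0 by (simp add: g_def)
  with m have m0: "0 < m" by (cases "m = 0") auto
  have "a / 2 * s \<le> v s \<and> v s \<le> 2 * a * s" if s: "s \<in> {0..m}" for s
  proof (rule v_between_slopes)
    show "s \<in> {0..T}" using s m t \<tau>T by auto
    fix x assume "x \<in> {0<..<s}"
    then show "a / 2 \<le> w x \<and> w x \<le> 2 * a" using before[of x] s by (auto simp: g_def)
  qed
  then have "a / 2 < w m \<and> w m < 2 * a"
    using m0 m t by (intro derivative_a_priori_bound[OF adm]) auto
  then show False using m(2) by (simp add: g_def min_def split: if_splits)
qed

lemma scale_lower_bound:
  assumes adm: "admissible a \<tau>"
  shows "a * \<tau> / 2 \<le> v \<tau>"
proof -
  have "a / 2 * \<tau> \<le> v \<tau> \<and> v \<tau> \<le> 2 * a * \<tau>"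
  proof (rule v_between_slopes)
    show "\<tau> \<in> {0..T}"
      using adm admissible_less_peak_bound[OF adm] by (auto simp: admissible_def)
    fix x assume "x \<in> {0<..<\<tau>}"
    then show "a / 2 \<le> w x \<and> w x \<le> 2 * a"
      using derivative_bootstrap[OF adm, of x] by auto
  qed
  then show ?thesis by simp
qed

lemma derivative_vanishes:
  assumes adm: "admissible a \<tau>"
  shows "\<exists>s\<in>{0..peak_bound a \<tau>}. w s \<le> 0"
proof (rule ccontr)
  define t1 where "t1 = peak_bound a \<tau>"
  define V where "V = a * \<tau> / 2"
  assume "\<not> (\<exists>s\<in>{0..peak_bound a \<tau>}. w s \<le> 0)"
  then have w_pos: "\<And>s. s \<in> {0..t1} \<Longrightarrow> 0 < w s" by (force simp: t1_def)
  have a: "0 < a" "0 < \<tau>" and V: "U < V" "\<beta> < V"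
    using adm by (auto simp: admissible_def V_def)
  have t1: "\<tau> < t1" "t1 < T" using admissible_less_peak_bound[OF adm] by (auto simp: t1_def)
  have "V \<le> v \<tau>" using scale_lower_bound[OF adm] by (simp add: V_def)
  moreover have "strict_mono_on {\<tau>..t1} v"
    using a t1 w_pos by (intro v_strict_mono_on) auto
  ultimately have v_ge: "V \<le> v s" if "s \<in> {\<tau>..t1}" for s
    using that strict_mono_onD[of "{\<tau>..t1}" v \<tau> s] by (cases "s = \<tau>") auto
  have "h0 * (V powr p / 2) \<le> H s * f (v s)" if s: "s \<in> {\<tau>..t1}" for s
  proof (rule mult_mono)
    show "h0 \<le> H s" using H_ge s a t1 by auto
    have "V powr p \<le> v s powr p" using v_ge[OF s] V \<beta>_pos p_gt_1 by (intro powr_mono2) auto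
    then show "V powr p / 2 \<le> f (v s)" using f_ge_large[of "v s"] v_ge[OF s] V by simp
  qed (use h0_pos H_pos[of s] s a t1 in auto)
  then have "integral {\<tau>..t1} (\<lambda>_. h0 * (V powr p / 2)) \<le> integral {\<tau>..t1} (\<lambda>s. H s * f (v s))"
    using integrable_on_subinterval[OF Hf_integrable, of \<tau> t1] a t1 by (intro integral_le) auto
  then have "h0 * (V powr p / 2) * (t1 - \<tau>) \<le> integral {\<tau>..t1} (\<lambda>s. H s * f (v s))"
    using t1 by (simp add: mult_ac)
  moreover have "h0 * (V powr p / 2) * (t1 - \<tau>) = 4 * a"
    using h0_pos a by (simp add: t1_def peak_bound_def V_def field_simps)
  moreover have "w t1 \<le> w \<tau> - integral {\<tau>..t1} (\<lambda>s. H s * f (v s))"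
    using a t1 v_ge V \<beta>_pos by (intro w_decrease) force+
  moreover have "w \<tau> < 2 * a" using derivative_bootstrap[OF adm, of \<tau>] a by auto
  ultimately have "w t1 < 0" using a by linarith
  then show False using w_pos[of t1] t1 a by auto
qed

lemma first_zero_first_local_max:
  assumes M: "M \<in> {0<..<T}" and w_pos: "\<And>s. s \<in> {0..<M} \<Longrightarrow> 0 < w s"
    and "w M \<le> 0" and "\<beta> < v M"
  shows "first_local_max T v M"
proof (rule first_local_maxI[OF M])
  show "strict_mono_on {0..M} v"
    using M w_pos by (intro v_strict_mono_on) auto
  have "M \<in> {0..T}" "0 < v M - \<beta>" using M \<open>\<beta> < v M\<close> by auto
  then obtain d where d: "0 < d" "\<forall>t\<in>{0..T}. dist t M < d \<longrightarrow> dist (v t) (v M) < v M - \<beta>"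
    using v_cont unfolding continuous_on_iff by blast
  have v_gt: "\<beta> < v t" if "t \<in> {0..T}" "\<bar>t - M\<bar> < d" for t
    using d(2) that by (auto simp: dist_real_def abs_less_iff)
  have "v t \<le> v M" if t: "t \<in> {M..T}" "t - M < d" for t
  proof (cases "t = M")
    case False
    then obtain x where x: "x \<in> {M<..<t}" "v t - v M = w x * (t - M)"
      using v_mvt[of M t] M t by auto
    have "0 \<le> H s * f (v s)" "0 \<le> v s" if "s \<in> {M..x}" for s
      using that x t M v_gt[of s] H_pos[of s] f_pos[of "v s"] \<beta>_pos by force+
    then have "w x \<le> w M - integral {M..x} (\<lambda>s. H s * f (v s))"
      "0 \<le> integral {M..x} (\<lambda>s. H s * f (v s))"
      using x t M integrable_on_subinterval[OF Hf_integrable, of M x]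
      by (auto intro!: w_decrease Henstock_Kurzweil_Integration.integral_nonneg)
    then have "w x * (t - M) \<le> 0"
      using \<open>w M \<le> 0\<close> x by (intro mult_nonpos_nonneg) auto
    then show ?thesis using x by simp
  qed simp
  then show "\<exists>e>0. \<forall>t\<in>{M..T}. t - M < e \<longrightarrow> v t \<le> v M"
    using d(1) by blast
qed

lemma first_local_max_exists:
  assumes adm: "admissible a \<tau>"
  shows "\<exists>M. first_local_max T v M \<and> M \<le> peak_bound a \<tau> \<and> a * \<tau> / 2 \<le> v M"
proof -
  have a: "0 < a" "0 < \<tau>" and \<beta>: "\<beta> < a * \<tau> / 2"
    using adm by (auto simp: admissible_def)
  have t1: "\<tau> < peak_bound a \<tau>" "peak_bound a \<tau> < T"
    using admissible_less_peak_bound[OF adm] by auto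
  obtain s where s: "s \<in> {0..peak_bound a \<tau>}" "w s \<le> 0"
    using derivative_vanishes[OF adm] by blast
  moreover have "continuous_on {0..peak_bound a \<tau>} w"
    using t1 by (intro continuous_on_subset[OF w_cont]) auto
  ultimately obtain M where M: "M \<in> {0..s}" "w M \<le> 0" and w_pos: "\<And>x. x \<in> {0..<M} \<Longrightarrow> 0 < w x"
    using continuous_on_first_nonpos[of 0 "peak_bound a \<tau>" w s] by blast
  have M_bound: "M \<le> peak_bound a \<tau>" using M s by auto
  have "\<tau> < M"
    using derivative_bootstrap[OF adm, of M] M a by (cases "M \<le> \<tau>") auto
  have "v \<tau> < v M"
    using v_strict_mono_on[of 0 M] w_pos \<open>\<tau> < M\<close> a M_bound t1
    by (auto intro: strict_mono_onD)
  then have v_M: "a * \<tau> / 2 \<le> v M" using scale_lower_bound[OF adm] by simp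
  have "first_local_max T v M"
    using \<open>\<tau> < M\<close> a M_bound t1 w_pos M(2) \<beta> v_M
    by (intro first_zero_first_local_max) auto
  then show ?thesis using M_bound v_M by blast
qed

end

section \<open>Choice of the scale\<close>

context weighted_problem
begin

lemma scale_exponent_bounds:
  assumes "(p - 1) / (p + e1 + 1) < \<theta>" "\<theta> < (p - 1) / p"
  shows "0 < \<theta>" "\<theta> < 1"
proof -
  have "0 < (p - 1) / (p + e1 + 1)" using p_gt_1 e1_gt q_pos by simp
  then show "0 < \<theta>" using assms by linarith
  have "\<theta> * p < p - 1" using assms p_gt_1 by (simp add: less_divide_eq)
  then show "\<theta> < 1" using p_gt_1 by (smt (verit) mult_le_cancel_right1)
qed

lemma peak_bound_tendsto_0:
  assumes "0 < \<theta>" "\<theta> < (p - 1) / p"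
  shows "((\<lambda>a. peak_bound a (a powr - \<theta>)) \<longlongrightarrow> 0) at_top"
proof -
  define c where "c = 8 * 2 powr p / h0"
  have "\<theta> * p < p - 1" using assms p_gt_1 by (simp add: less_divide_eq)
  then have "((\<lambda>a. a powr - \<theta> + c * a powr (1 - (1 - \<theta>) * p)) \<longlongrightarrow> 0 + c * 0) at_top"
    using assms by (intro tendsto_intros tendsto_neg_powr filterlim_ident) (auto simp: algebra_simps)
  moreover have "eventually (\<lambda>a. a powr - \<theta> + c * a powr (1 - (1 - \<theta>) * p) = peak_bound a (a powr - \<theta>)) at_top"
    using eventually_gt_at_top[of 0]
  proof eventually_elim
    case (elim a)
    have "(a * a powr - \<theta> / 2) powr p = a powr ((1 - \<theta>) * p) / 2 powr p"
      using powr_mult_base[of a "- \<theta>"] elim by (simp add: powr_divide powr_powr)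
    moreover have "a powr (1 - (1 - \<theta>) * p) = a / a powr ((1 - \<theta>) * p)"
      using elim by (simp add: powr_diff)
    ultimately show ?case using h0_pos by (simp add: peak_bound_def c_def)
  qed
  ultimately show ?thesis by (simp add: tendsto_cong)
qed

lemma admissible_powr_scaleI:
  assumes a: "0 < a"
    and "C1 * Cf * 2 powr q / (e1 - q + 1) * a powr (- q - \<theta> * (e1 - q + 1)) < a"
    and "C1 * C2 / (e1 + 1) * a powr (- \<theta> * (e1 + 1))
         + 2 * C1 * 2 powr p / (e1 + 1) * a powr (p - \<theta> * (p + e1 + 1))
         + 2 / \<delta> * a powr (1 - \<theta> * \<delta>) < a / 2"
    and "2 * max U \<beta> < a powr (1 - \<theta>)"
    and "peak_bound a (a powr - \<theta>) < T"
  shows "admissible a (a powr - \<theta>)"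
proof -
  have "(a / 2) powr (- q) = 2 powr q * a powr (- q)"
    using a by (simp add: powr_divide powr_minus_divide)
  moreover have "a powr (- q) * (a powr - \<theta>) powr (e1 - q + 1) = a powr (- q - \<theta> * (e1 - q + 1))"
    by (simp add: powr_powr flip: powr_add)
  ultimately have scale1: "C1 * Cf * (a / 2) powr (- q) * (a powr - \<theta>) powr (e1 - q + 1) / (e1 - q + 1)
      = C1 * Cf * 2 powr q / (e1 - q + 1) * a powr (- q - \<theta> * (e1 - q + 1))"
    by (simp add: mult_ac)
  have "(2 * a * a powr - \<theta>) powr p = 2 powr p * (a powr p * a powr (- \<theta> * p))"
    using a by (simp add: powr_mult powr_powr)
  moreover have "a powr p * a powr (- \<theta> * p) * (a powr - \<theta>) powr (e1 + 1) = a powr (p - \<theta> * (p + e1 + 1))"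
    by (simp add: powr_powr algebra_simps flip: powr_add)
  moreover have "(a powr - \<theta>) powr (e1 + 1) = a powr (- \<theta> * (e1 + 1))"
    by (simp add: powr_powr)
  ultimately have scale2: "C1 * (C2 + 2 * (2 * a * a powr - \<theta>) powr p) * (a powr - \<theta>) powr (e1 + 1) / (e1 + 1)
      = C1 * C2 / (e1 + 1) * a powr (- \<theta> * (e1 + 1))
        + 2 * C1 * 2 powr p / (e1 + 1) * a powr (p - \<theta> * (p + e1 + 1))"
    by (simp add: ring_distribs add_divide_distrib mult_ac)
  have scale3: "2 * a * (a powr - \<theta>) powr \<delta> / \<delta> = 2 / \<delta> * a powr (1 - \<theta> * \<delta>)"
    using powr_mult_base[of a "- \<theta> * \<delta>"] a by (simp add: powr_powr mult_ac)
  have scale4: "a * a powr - \<theta> / 2 = a powr (1 - \<theta>) / 2"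
    using powr_mult_base[of a "- \<theta>"] a by simp
  show ?thesis
    unfolding admissible_def scale1 scale2 scale3 scale4 using assms by auto
qed

lemma eventually_admissible:
  assumes \<theta>: "(p - 1) / (p + e1 + 1) < \<theta>" "\<theta> < (p - 1) / p"
  shows "eventually (\<lambda>a. admissible a (a powr - \<theta>)) at_top"
proof -
  have e1: "0 < e1 - q + 1" "0 < e1 + 1" using e1_gt q_pos by auto
  note \<theta>_pos = scale_exponent_bounds(1)[OF \<theta>] and \<theta>_lt_1 = scale_exponent_bounds(2)[OF \<theta>]
  have "p - \<theta> * (p + e1 + 1) < 1"
    using \<theta>(1) p_gt_1 e1 by (simp add: divide_less_eq algebra_simps)
  then have "eventually (\<lambda>a. 2 * C1 * 2 powr p / (e1 + 1) * a powr (p - \<theta> * (p + e1 + 1)) < 1 / 6 * a) at_top"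
    by (intro eventually_powr_less_linear) auto
  moreover have "eventually (\<lambda>a. C1 * Cf * 2 powr q / (e1 - q + 1) * a powr (- q - \<theta> * (e1 - q + 1)) < 1 * a) at_top"
    using q_pos mult_pos_pos[OF \<theta>_pos e1(1)] by (intro eventually_powr_less_linear) auto
  moreover have "eventually (\<lambda>a. C1 * C2 / (e1 + 1) * a powr (- \<theta> * (e1 + 1)) < 1 / 6 * a) at_top"
    using mult_pos_pos[OF \<theta>_pos e1(2)] by (intro eventually_powr_less_linear) auto
  moreover have "eventually (\<lambda>a. 2 / \<delta> * a powr (1 - \<theta> * \<delta>) < 1 / 6 * a) at_top"
    using \<theta>_pos \<delta>_pos by (intro eventually_powr_less_linear) auto
  moreover have "eventually (\<lambda>a. 2 * max U \<beta> < a powr (1 - \<theta>)) at_top"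
    using real_powr_at_top[of "1 - \<theta>"] \<theta>_lt_1 by (simp add: filterlim_at_top_dense)
  moreover have "eventually (\<lambda>a. peak_bound a (a powr - \<theta>) < T) at_top"
    using order_tendstoD(2)[OF peak_bound_tendsto_0 T_pos] \<theta>_pos \<theta>(2) by blast
  ultimately show ?thesis using eventually_gt_at_top[of 0]
    by eventually_elim (intro admissible_powr_scaleI; linarith)
qed

lemma eventually_first_local_max:
  assumes \<theta>: "(p - 1) / (p + e1 + 1) < \<theta>" "\<theta> < (p - 1) / p"
    and sol: "\<And>a. 0 < a \<Longrightarrow> \<exists>w. integral_solution T \<delta> H f a (v a) w"
  shows "\<exists>A>0. \<forall>a>A. \<exists>M. first_local_max T (v a) M \<and> M \<le> peak_bound a (a powr - \<theta>)
                          \<and> a powr (1 - \<theta>) / 2 \<le> v a M"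
proof -
  obtain A where A: "\<And>a. A \<le> a \<Longrightarrow> admissible a (a powr - \<theta>)"
    using eventually_admissible[OF \<theta>] by (auto simp: eventually_at_top_linorder)
  have "\<exists>M. first_local_max T (v a) M \<and> M \<le> peak_bound a (a powr - \<theta>) \<and> a powr (1 - \<theta>) / 2 \<le> v a M"
    if "max A 1 < a" for a
  proof -
    have a: "0 < a" "A \<le> a" using that by auto
    obtain w where "integral_solution T \<delta> H f a (v a) w" using sol[OF a(1)] by blast
    then interpret weighted_solution T \<delta> p q \<beta> C1 e1 h0 Cf C2 U H f a "v a" w
      by (intro weighted_solution.intro weighted_problem_axioms)
    show ?thesis
      using first_local_max_exists[OF A[OF a(2)]] powr_mult_base[of a "- \<theta>"] a(1) by simp
  qed
  then show ?thesis by (intro exI[of _ "max A 1"]) auto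
qed

lemma first_local_max_asymptotics:
  assumes sol: "\<And>a. 0 < a \<Longrightarrow> \<exists>w. integral_solution T \<delta> H f a (v a) w"
  shows "\<exists>A>0. \<exists>M. (\<forall>a>A. first_local_max T (v a) (M a))
           \<and> (M \<longlongrightarrow> 0) at_top \<and> filterlim (\<lambda>a. v a (M a)) at_top at_top"
proof -
  have "(p - 1) / (p + e1 + 1) < (p - 1) / p"
    using p_gt_1 e1_gt q_pos by (intro divide_strict_left_mono) auto
  then obtain \<theta> where \<theta>: "(p - 1) / (p + e1 + 1) < \<theta>" "\<theta> < (p - 1) / p"
    using dense by blast
  note \<theta>_pos = scale_exponent_bounds(1)[OF \<theta>] and \<theta>_lt_1 = scale_exponent_bounds(2)[OF \<theta>]
  obtain A where "A > 0" and ex: "\<And>a. A < a \<Longrightarrow> \<exists>M. first_local_max T (v a) M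
      \<and> M \<le> peak_bound a (a powr - \<theta>) \<and> a powr (1 - \<theta>) / 2 \<le> v a M"
    using eventually_first_local_max[OF \<theta> sol] by blast
  define M where "M a = (SOME M. first_local_max T (v a) M
      \<and> M \<le> peak_bound a (a powr - \<theta>) \<and> a powr (1 - \<theta>) / 2 \<le> v a M)" for a
  have M: "first_local_max T (v a) (M a) \<and> M a \<le> peak_bound a (a powr - \<theta>)
      \<and> a powr (1 - \<theta>) / 2 \<le> v a (M a)" if "A < a" for a
    using someI_ex[OF ex[OF that]] unfolding M_def .
  have "\<forall>\<^sub>F a in at_top. A < a" by (rule eventually_gt_at_top)
  then have bounds: "\<forall>\<^sub>F a in at_top. 0 \<le> M a \<and> M a \<le> peak_bound a (a powr - \<theta>)
      \<and> a powr (1 - \<theta>) / 2 \<le> v a (M a)"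
  proof eventually_elim
    case (elim a)
    then show ?case using M[OF elim] by (auto simp: first_local_max_def interior_local_max_def)
  qed
  have peak: "((\<lambda>a. peak_bound a (a powr - \<theta>)) \<longlongrightarrow> 0) at_top"
    using peak_bound_tendsto_0 \<theta>_pos \<theta>(2) by blast
  have "(M \<longlongrightarrow> 0) at_top"
    by (rule tendsto_sandwich[OF _ _ tendsto_const peak]) (use bounds in \<open>auto elim: eventually_mono\<close>)
  have "filterlim (\<lambda>a. a powr (1 - \<theta>) * (1 / 2)) at_top at_top"
    using real_powr_at_top[of "1 - \<theta>"] \<theta>_lt_1
    by (intro filterlim_at_top_mult_tendsto_pos[OF tendsto_const]) auto
  then have "filterlim (\<lambda>a. v a (M a)) at_top at_top"
    by (rule filterlim_at_top_mono) (use bounds in \<open>auto elim: eventually_mono\<close>)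
  with \<open>(M \<longlongrightarrow> 0) at_top\<close> show ?thesis using M \<open>A > 0\<close> by blast
qed

end

lemma solves_Pa_integral_solution:
  assumes "solves_Pa N R \<delta> K f a v" "0 < R" "0 < \<delta>"
  shows "\<exists>w. integral_solution (R powr (2 - real N)) \<delta> (hfun N K) f a v w"
proof -
  obtain w where "\<forall>t\<in>{0..R powr (2 - real N)}. (v has_real_derivative w t) (at t within {0..R powr (2 - real N)})"
    "continuous_on {0..R powr (2 - real N)} w" "v 0 = 0"
    "(\<lambda>s. hfun N K s * f (v s)) absolutely_integrable_on {0..R powr (2 - real N)}"
    "\<forall>t\<in>{0..R powr (2 - real N)}. w t = a - integral {0..t} (\<lambda>s. hfun N K s * f (v s))
                                - integral {0..t} (\<lambda>s. s powr (\<delta> - 2) * v s)"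
    using assms(1) unfolding solves_Pa_def Let_def by blast
  then have "integral_solution (R powr (2 - real N)) \<delta> (hfun N K) f a v w"
    using assms(2,3) by unfold_locales (auto simp: absolutely_integrable_on_def)
  then show ?thesis by blast
qed

theorem lemma2p6:
  fixes N :: nat and R \<delta> p q \<beta> K0 K1 \<alpha> \<alpha>1 :: real
    and f g g1 K K' :: "real \<Rightarrow> real"
    and v :: "real \<Rightarrow> real \<Rightarrow> real"
  assumes N: "N > 2" and R: "R > 0" and \<delta>: "0 < \<delta>" "\<delta> < 2"
    and f_odd: "\<forall>u. u \<noteq> 0 \<longrightarrow> f (- u) = - f u"
    and f_lip: "loc_lipschitz_on (- {0}) f"
    and H1: "p > 1" "\<exists>U. \<forall>u. \<bar>u\<bar> \<ge> U \<longrightarrow> f u = \<bar>u\<bar> powr (p - 1) * u + g u"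
      "((\<lambda>u. \<bar>g u\<bar> / \<bar>u\<bar> powr p) \<longlongrightarrow> 0) at_top"
    and H2: "0 < q" "q < 1" "loc_lipschitz_on UNIV g1" "g1 0 = 0"
      "\<exists>\<epsilon>>0. \<forall>u. 0 < \<bar>u\<bar> \<and> \<bar>u\<bar> < \<epsilon> \<longrightarrow> f u = - 1 / (\<bar>u\<bar> powr (q - 1) * u) + g1 u"
    and H3: "\<beta> > 0" "f \<beta> = 0" "\<forall>u>0. f u = 0 \<longrightarrow> u = \<beta>"
      "\<forall>u. 0 < u \<and> u < \<beta> \<longrightarrow> f u < 0" "\<forall>u>\<beta>. f u > 0"
    and K_pos: "\<forall>r\<ge>R. K r > 0"
    and K_deriv: "\<forall>r\<ge>R. (K has_real_derivative K' r) (at r within {R..})"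
    and K_cont: "continuous_on {R..} K" and K'_cont: "continuous_on {R..} K'"
    and H4: "\<forall>r\<ge>R. r * K' r / K r > - 2 * (real N - 1)"
      "K0 > 0" "K1 > 0"
      "real N + q * (real N - 2) < \<alpha>1" "\<alpha>1 \<le> \<alpha>" "\<alpha> < 2 * (real N - 1)"
      "\<forall>r\<ge>R. K0 * r powr (- \<alpha>) \<le> K r \<and> K r \<le> K1 * r powr (- \<alpha>1)"
    and sol: "\<forall>a>0. solves_Pa N R \<delta> K f a (v a)"
  shows "\<exists>A>0. \<exists>M :: real \<Rightarrow> real.
           (\<forall>a>A. first_local_max (R powr (2 - real N)) (v a) (M a))
         \<and> (M \<longlongrightarrow> 0) at_top
         \<and> filterlim (\<lambda>a. v a (M a)) at_top at_top"
proof -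
  obtain C1 e1 h0 where h: "0 \<le> C1" "q - 1 < e1" "0 < h0"
    and h_bounds: "\<forall>s\<in>{0<..R powr (2 - real N)}.
      0 < hfun N K s \<and> hfun N K s \<le> C1 * s powr e1 \<and> h0 \<le> hfun N K s"
    using hfun_weight_bounds[OF N R K_pos H4(7,2,3,4,6)] by blast
  have f_cont: "continuous_on {0<..} f"
    using loc_lipschitz_on_imp_continuous_on[OF f_lip] by (rule continuous_on_subset) auto
  have "isCont g1 0"
    using loc_lipschitz_on_imp_continuous_on[OF H2(3)] by (simp add: continuous_on_eq_continuous_at)
  obtain Cf C2 U where Cf: "0 \<le> Cf" "\<And>u. 0 < u \<Longrightarrow> - Cf * u powr (- q) \<le> f u"
    and C2: "0 \<le> C2" "\<And>u. 0 < u \<Longrightarrow> f u \<le> C2 + 2 * u powr p"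
    and U: "\<And>u. U \<le> u \<Longrightarrow> u powr p / 2 \<le> f u"
    using nonlinearity_bounds[OF f_cont H2(1) H3(1) \<open>isCont g1 0\<close> H1(2,3) H2(5) H3(4,5)] by metis
  interpret weighted_problem "R powr (2 - real N)" \<delta> p q \<beta> C1 e1 h0 Cf C2 U "hfun N K" f
    using R \<delta>(1) H1(1) H2(1) H3(1,5) h h_bounds Cf C2 U by unfold_locales auto
  show ?thesis
    using first_local_max_asymptotics solves_Pa_integral_solution sol R \<delta>(1) by blast
qed

end
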